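(* For an ellipse $\mathcal{A}=\{\mathbf{u}\in\mathbb{R}^2:(\mathbf{u}-\mathbf{y})^TY(\mathbf{u}-\mathbf{y})=1\}$ with center $\mathbf{y}\in\mathbb{R}^2$ and symmetric positive definite $2\times2$ matrix $Y$, let $p_{\mathcal{A}}(\mathbf{u})=\exp\!\big[-\tfrac12(\mathbf{u}-\mathbf{y})^TY(\mathbf{u}-\mathbf{y})\big]$ (up to a positive constant factor, the density of the Gaussian $N(\mathbf{y},Y^{-1})$). For two ellipses $\mathcal{A}_i,\mathcal{A}_j$ define $$d_{GA}(\mathcal{A}_i,\mathcal{A}_j)=\arccos\frac{\int_{\mathbb{R}^2}p_{\mathcal{A}_i}p_{\mathcal{A}_j}\,d\mathbf{u}}{\sqrt{\int_{\mathbb{R}^2}p_{\mathcal{A}_i}^2\,d\mathbf{u}\int_{\mathbb{R}^2}p_{\mathcal{A}_j}^2\,d\mathbf{u}}}.$$ Then on the set of ellipses in $\mathbb{R}^2$: (1) $d_{GA}(\mathcal{A}_i,\mathcal{A}_j)=0$ iff $\mathcal{A}_i=\mathcal{A}_j$; (2) $d_{GA}(\mathcal{A}_i,\mathcal{A}_j)=d_{GA}(\mathcal{A}_j,\mathcal{A}_i)$; (3) $d_{GA}(\mathcal{A}_i,\mathcal{A}_j)\le d_{GA}(\mathcal{A}_i,\mathcal{A}_k)+d_{GA}(\mathcal{A}_k,\mathcal{A}_j)$ for all ellipses $\mathcal{A}_k$; (4) $d_{GA}(S[\mathcal{A}_i],S[\mathcal{A}_j])=d_{GA}(\mathcal{A}_i,\mathcal{A}_j)$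 for every similarity transformation $S$ of $\mathbb{R}^2$ (composition of translation, rotation and uniform scaling by a positive factor).
   Context: $S[\mathcal{A}]$ denotes the image of the ellipse $\mathcal{A}$ (as a subset of $\mathbb{R}^2$) under $S$, which is again an ellipse. The value of $d_{GA}$ does not depend on the positive normalizing constants chosen for $p_{\mathcal{A}}$. *)

theory Defs
  imports "HOL-Analysis.Analysis"
begin

definition spd2 :: "real^2^2 \<Rightarrow> bool" where
  "spd2 Y \<longleftrightarrow> transpose Y = Y \<and> (\<forall>x::real^2. x \<noteq> 0 \<longrightarrow> x \<bullet> (Y *v x) > 0)"

definition ellipse_set :: "real^2 \<Rightarrow> real^2^2 \<Rightarrow> (real^2) set" where
  "ellipse_set y Y = {u. (u - y) \<bullet> (Y *v (u - y)) = 1}"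

definition is_ellipse :: "(real^2) set \<Rightarrow> bool" where
  "is_ellipse A \<longleftrightarrow> (\<exists>y Y. spd2 Y \<and> A = ellipse_set y Y)"

definition ell_params :: "(real^2) set \<Rightarrow> (real^2) \<times> (real^2^2)" where
  "ell_params A = (SOME (y, Y). spd2 Y \<and> A = ellipse_set y Y)"

definition ell_density :: "(real^2) set \<Rightarrow> real^2 \<Rightarrow> real" where
  "ell_density A u = (case ell_params A of (y, Y) \<Rightarrow>
      exp (- (1/2) * ((u - y) \<bullet> (Y *v (u - y)))))"

definition d_GA :: "(real^2) set \<Rightarrow> (real^2) set \<Rightarrow> real" where
  "d_GA A B = arccos
     (integral UNIV (\<lambda>u. ell_density A u * ell_density B u) /
      sqrt (integral UNIV (\<lambda>u. (ell_density A u)\<^sup>2) * integral UNIV (\<lambda>u. (ell_density B u)\<^sup>2)))"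

definition similarity2 :: "(real^2 \<Rightarrow> real^2) \<Rightarrow> bool" where
  "similarity2 S \<longleftrightarrow> (\<exists>c (R::real^2^2) b. c > 0 \<and> orthogonal_matrix R \<and> det R = 1 \<and>
      S = (\<lambda>x. c *\<^sub>R (R *v x) + b))"

end

theory Submission
  imports Defs "HOL-Probability.Probability"
begin

text \<open>An ellipse determines its centre and matrix, so \<open>p\<^sub>A\<close> is a well-defined Gaussian kernel
  and \<open>d\<^sub>G\<^sub>A\<close> is the angle between two such kernels in \<open>L\<^sup>2(\<real>\<^sup>2)\<close>. Angles between vectors of an
  inner product space satisfy the triangle inequality because the Gram matrix of three vectors is
  positive semidefinite. The angle vanishes only for positively proportional vectors, and
  proportional Gaussian kernels have quadratic forms differing by a constant, hence the same centre
  and matrix. A similarity \<open>x \<mapsto> c R x + b\<close> maps an ellipse to an ellipse whose kernel composed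
  with the similarity is the original kernel, so all three integrals acquire the same Jacobian
  factor, which cancels in the quotient.\<close>

section \<open>Positive semidefinite Gram forms\<close>

lemma mult_self_le_if_quadratic_form_nonneg:
  fixes p q m :: real
  assumes form: "\<And>r s. 0 \<le> r * r * p + s * s * q + 2 * r * s * m"
  shows "m * m \<le> p * q"
proof (cases "p = 0")
  case True
  show ?thesis
  proof (cases "m = 0")
    case False
    have "0 \<le> (-(q + 1) / (2 * m)) * (-(q + 1) / (2 * m)) * p + 1 * 1 * q + 2 * (-(q + 1) / (2 * m)) * 1 * m"
      by (rule form)
    also have "\<dots> = -1" using True False by (simp add: field_simps)
    finally show ?thesis by simp
  qed (use True in simp)
next
  case False
  with form[of 1 0] have "p > 0" by simp
  have "0 \<le> (-m) * (-m) * p + p * p * q + 2 * (-m) * p * m" by (rule form)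
  also have "\<dots> = p * (p * q - m * m)" by (simp add: algebra_simps)
  finally show ?thesis using \<open>p > 0\<close> by (simp add: zero_le_mult_iff)
qed

text \<open>Eliminating \<open>t\<close> (a Schur complement) and applying Cauchy--Schwarz to the remaining form
  in \<open>r, s\<close> gives \<open>cos (arccos x + arccos y) \<le> z\<close>.\<close>
lemma arccos_le_add_arccos_if_gram_nonneg:
  fixes x y z :: real
  assumes gram: "\<And>r s t. 0 \<le> r * r + s * s + t * t + 2 * r * s * z + 2 * r * t * x + 2 * s * t * y"
  shows "arccos z \<le> arccos x + arccos y"
proof -
  have abs_le_1: "\<bar>w\<bar> \<le> 1" if "w * w \<le> 1 * 1" for w :: real
    using that by (metis abs_le_square_iff abs_one power2_eq_square)
  have z: "\<bar>z\<bar> \<le> 1" by (rule abs_le_1, rule mult_self_le_if_quadratic_form_nonneg) (use gram[of _ _ 0] in simp)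
  have x: "\<bar>x\<bar> \<le> 1" by (rule abs_le_1, rule mult_self_le_if_quadratic_form_nonneg) (use gram[of _ 0] in simp)
  have y: "\<bar>y\<bar> \<le> 1" by (rule abs_le_1, rule mult_self_le_if_quadratic_form_nonneg) (use gram[of 0] in simp)
  have schur: "0 \<le> r * r * (1 - x * x) + s * s * (1 - y * y) + 2 * r * s * (z - x * y)" for r s
  proof -
    have "0 \<le> r * r + s * s + (-(r * x + s * y)) * (-(r * x + s * y)) + 2 * r * s * z
        + 2 * r * (-(r * x + s * y)) * x + 2 * s * (-(r * x + s * y)) * y"
      by (rule gram)
    also have "\<dots> = r * r * (1 - x * x) + s * s * (1 - y * y) + 2 * r * s * (z - x * y)"
      by (simp add: algebra_simps)
    finally show ?thesis .
  qed
  have "(z - x * y) * (z - x * y) \<le> (1 - x * x) * (1 - y * y)"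
    by (rule mult_self_le_if_quadratic_form_nonneg) (rule schur)
  then have "\<bar>z - x * y\<bar> \<le> sqrt ((1 - x * x) * (1 - y * y))"
    by (metis real_sqrt_abs real_sqrt_le_mono power2_eq_square)
  then have cos_le: "cos (arccos x + arccos y) \<le> z"
    using x y by (simp add: cos_add sin_arccos_abs power2_eq_square real_sqrt_mult)
  show ?thesis
  proof (cases "arccos x + arccos y \<le> pi")
    case False
    then show ?thesis using arccos_ubound[of z] z by (simp add: abs_le_iff)
  next
    case True
    have "0 \<le> arccos x + arccos y"
      using arccos_lbound[of x] arccos_lbound[of y] x y by (simp add: abs_le_iff)
    then have "arccos (cos (arccos x + arccos y)) = arccos x + arccos y"
      using True by (simp add: arccos_cos)
    moreover have "arccos z \<le> arccos (cos (arccos x + arccos y))"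
      by (rule arccos_le_arccos) (use cos_le z in \<open>auto simp: abs_le_iff\<close>)
    ultimately show ?thesis by simp
  qed
qed

section \<open>The angle between square-integrable functions\<close>

definition square_integrable :: "('a::euclidean_space \<Rightarrow> real) \<Rightarrow> bool" where
  "square_integrable f \<longleftrightarrow> f \<in> borel_measurable lborel \<and> integrable lborel (\<lambda>u. (f u)\<^sup>2)"

definition L2_inner :: "('a::euclidean_space \<Rightarrow> real) \<Rightarrow> ('a \<Rightarrow> real) \<Rightarrow> real" where
  "L2_inner f g = integral UNIV (\<lambda>u. f u * g u)"

definition L2_angle :: "('a::euclidean_space \<Rightarrow> real) \<Rightarrow> ('a \<Rightarrow> real) \<Rightarrow> real" where
  "L2_angle f g = arccos (L2_inner f g / sqrt (L2_inner f f * L2_inner g g))"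

lemma integrable_mult_if_square_integrable:
  assumes "square_integrable f" "square_integrable g"
  shows "integrable lborel (\<lambda>u. f u * g u)"
proof (rule Bochner_Integration.integrable_bound)
  show "integrable lborel (\<lambda>u. (f u)\<^sup>2 + (g u)\<^sup>2)"
    using assms by (simp add: square_integrable_def)
  show "(\<lambda>u. f u * g u) \<in> borel_measurable lborel"
    using assms by (simp add: square_integrable_def borel_measurable_times)
  have "\<bar>a * b\<bar> \<le> a\<^sup>2 + b\<^sup>2" for a b :: real
  proof -
    have "2 * \<bar>a\<bar> * \<bar>b\<bar> \<le> a\<^sup>2 + b\<^sup>2" using sum_squares_bound[of "\<bar>a\<bar>" "\<bar>b\<bar>"] by simp
    moreover have "\<bar>a * b\<bar> = \<bar>a\<bar> * \<bar>b\<bar>" "0 \<le> \<bar>a\<bar> * \<bar>b\<bar>" by (simp_all add: abs_mult)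
    ultimately show ?thesis by linarith
  qed
  then show "AE u in lborel. norm (f u * g u) \<le> norm ((f u)\<^sup>2 + (g u)\<^sup>2)"
    by simp
qed

lemma L2_inner_eq_lborel:
  "square_integrable f \<Longrightarrow> square_integrable g \<Longrightarrow> L2_inner f g = (\<integral>u. f u * g u \<partial>lborel)"
  unfolding L2_inner_def by (rule integral_lborel[OF integrable_mult_if_square_integrable])

lemma L2_inner_commute: "L2_inner f g = L2_inner g f"
  by (simp add: L2_inner_def mult.commute)

lemma L2_angle_commute: "L2_angle f g = L2_angle g f"
  by (simp add: L2_angle_def L2_inner_commute mult.commute)

lemma L2_angle_self: "0 < L2_inner f f \<Longrightarrow> L2_angle f f = 0"
  by (simp add: L2_angle_def)

lemma L2_norm_lincomb:
  assumes f: "square_integrable f" and g: "square_integrable g" and h: "square_integrable h"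
  shows "integrable lborel (\<lambda>u. (r * f u + s * g u + t * h u)\<^sup>2)"
    and "(\<integral>u. (r * f u + s * g u + t * h u)\<^sup>2 \<partial>lborel) =
      r * r * L2_inner f f + s * s * L2_inner g g + t * t * L2_inner h h
      + 2 * r * s * L2_inner f g + 2 * r * t * L2_inner f h + 2 * s * t * L2_inner h g"
proof -
  have expand: "(\<lambda>u. (r * f u + s * g u + t * h u)\<^sup>2) = (\<lambda>u. r * r * (f u * f u) + s * s * (g u * g u)
      + t * t * (h u * h u) + 2 * r * s * (f u * g u) + 2 * r * t * (f u * h u) + 2 * s * t * (h u * g u))"
    by (simp add: fun_eq_iff power2_eq_square algebra_simps)
  note ints = integrable_mult_if_square_integrable[OF f f] integrable_mult_if_square_integrable[OF g g]
    integrable_mult_if_square_integrable[OF h h] integrable_mult_if_square_integrable[OF f g]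
    integrable_mult_if_square_integrable[OF f h] integrable_mult_if_square_integrable[OF h g]
  show "integrable lborel (\<lambda>u. (r * f u + s * g u + t * h u)\<^sup>2)"
    unfolding expand using ints by simp
  show "(\<integral>u. (r * f u + s * g u + t * h u)\<^sup>2 \<partial>lborel) =
      r * r * L2_inner f f + s * s * L2_inner g g + t * t * L2_inner h h
      + 2 * r * s * L2_inner f g + 2 * r * t * L2_inner f h + 2 * s * t * L2_inner h g"
    unfolding expand using ints f g h by (simp add: L2_inner_eq_lborel)
qed

lemma L2_gram_form_nonneg:
  assumes "square_integrable f" "square_integrable g" "square_integrable h"
  shows "0 \<le> r * r * L2_inner f f + s * s * L2_inner g g + t * t * L2_inner h h
      + 2 * r * s * L2_inner f g + 2 * r * t * L2_inner f h + 2 * s * t * L2_inner h g"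
  using L2_norm_lincomb(2)[OF assms, of r s t, symmetric] by simp

lemma L2_cauchy_schwarz:
  assumes "square_integrable f" "square_integrable g"
  shows "L2_inner f g * L2_inner f g \<le> L2_inner f f * L2_inner g g"
  by (rule mult_self_le_if_quadratic_form_nonneg)
     (use L2_gram_form_nonneg[OF assms assms(2), where t = 0] in \<open>simp add: L2_inner_commute\<close>)

lemma L2_angle_triangle:
  assumes f: "square_integrable f" "0 < L2_inner f f"
    and g: "square_integrable g" "0 < L2_inner g g"
    and h: "square_integrable h" "0 < L2_inner h h"
  shows "L2_angle f g \<le> L2_angle f h + L2_angle h g"
proof -
  define a b c where "a = sqrt (L2_inner f f)" and "b = sqrt (L2_inner g g)" and "c = sqrt (L2_inner h h)"
  have pos: "a > 0" "b > 0" "c > 0" using f g h by (simp_all add: a_def b_def c_def)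
  have sq: "L2_inner f f = a * a" "L2_inner g g = b * b" "L2_inner h h = c * c"
    using f g h by (simp_all add: a_def b_def c_def)
  have "0 \<le> r * r + s * s + t * t + 2 * r * s * (L2_inner f g / (a * b))
      + 2 * r * t * (L2_inner f h / (a * c)) + 2 * s * t * (L2_inner h g / (c * b))" for r s t
  proof -
    have "0 \<le> (r / a) * (r / a) * L2_inner f f + (s / b) * (s / b) * L2_inner g g
        + (t / c) * (t / c) * L2_inner h h + 2 * (r / a) * (s / b) * L2_inner f g
        + 2 * (r / a) * (t / c) * L2_inner f h + 2 * (s / b) * (t / c) * L2_inner h g"
      by (rule L2_gram_form_nonneg[OF f(1) g(1) h(1)])
    also have "\<dots> = r * r + s * s + t * t + 2 * r * s * (L2_inner f g / (a * b))
        + 2 * r * t * (L2_inner f h / (a * c)) + 2 * s * t * (L2_inner h g / (c * b))"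
      using pos by (simp add: sq field_simps)
    finally show ?thesis .
  qed
  then have "arccos (L2_inner f g / (a * b)) \<le> arccos (L2_inner f h / (a * c)) + arccos (L2_inner h g / (c * b))"
    by (rule arccos_le_add_arccos_if_gram_nonneg)
  then show ?thesis by (simp add: L2_angle_def sq real_sqrt_mult pos less_imp_le)
qed

lemma continuous_nonneg_integral_eq_0:
  fixes f :: "'a::euclidean_space \<Rightarrow> real"
  assumes "continuous_on UNIV f" "\<And>x. 0 \<le> f x" "integrable lborel f" "(\<integral>x. f x \<partial>lborel) = 0"
  shows "f x = 0"
proof -
  have "AE x in lborel. f x = 0"
    using integral_nonneg_eq_0_iff_AE[of lborel f] assms(2-4) by simp
  then have "AE x in lebesgue. f x = 0"
    by (rule AE_completion)
  moreover have "closed {x. f x = 0}"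
    using assms(1) by (intro closed_Collect_eq) (auto intro: continuous_on_subset)
  ultimately show ?thesis
    using mem_closed_if_AE_lebesgue[of "{x. f x = 0}"] by simp
qed

lemma L2_angle_eq_0_imp_proportional:
  assumes f: "square_integrable f" "0 < L2_inner f f" "continuous_on UNIV f"
    and g: "square_integrable g" "0 < L2_inner g g" "continuous_on UNIV g"
    and angle: "L2_angle f g = 0"
  obtains k where "k > 0" "\<And>u. f u = k * g u"
proof -
  define a b where "a = sqrt (L2_inner f f)" and "b = sqrt (L2_inner g g)"
  have pos: "a > 0" "b > 0" using f g by (simp_all add: a_def b_def)
  have sq: "L2_inner f f = a * a" "L2_inner g g = b * b"
    using f g by (simp_all add: a_def b_def)
  have "\<bar>L2_inner f g\<bar> \<le> a * b"
    using L2_cauchy_schwarz[OF f(1) g(1)] pos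
    by (metis abs_le_square_iff abs_of_pos mult_pos_pos power2_eq_square sq mult.commute mult.left_commute)
  then have "arccos (L2_inner f g / (a * b)) = 0 \<longleftrightarrow> L2_inner f g / (a * b) = 1"
    using pos by (intro arccos_eq_0_iff) (simp add: abs_le_iff field_simps)
  moreover have "arccos (L2_inner f g / (a * b)) = 0"
    using angle by (simp add: L2_angle_def sq real_sqrt_mult pos less_imp_le)
  ultimately have fg: "L2_inner f g = a * b" using pos by simp
  \<comment> \<open>\<open>\<parallel>f/a - g/b\<parallel>\<^sup>2 = 0\<close>; the dummy third summand lets us reuse \<open>L2_norm_lincomb\<close>.\<close>
  let ?d = "\<lambda>u. ((1 / a) * f u + (- 1 / b) * g u + 0 * g u)\<^sup>2"
  have "(\<integral>u. ?d u \<partial>lborel) = (1 / a) * (1 / a) * (a * a) + (- 1 / b) * (- 1 / b) * (b * b)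
      + 2 * (1 / a) * (- 1 / b) * (a * b)"
    by (simp only: L2_norm_lincomb(2)[OF f(1) g(1) g(1)] sq fg L2_inner_commute[of g f])
  also have "\<dots> = 0" using pos by (simp add: field_simps)
  finally have integral_0: "(\<integral>u. ?d u \<partial>lborel) = 0" .
  have "continuous_on UNIV ?d"
    using f(3) g(3) by (intro continuous_intros)
  then have "?d u = 0" for u
    by (rule continuous_nonneg_integral_eq_0[OF _ _ L2_norm_lincomb(1)[OF f(1) g(1) g(1)] integral_0]) simp
  then have "f u = (a / b) * g u" for u
    using pos by (simp add: field_simps)
  moreover have "a / b > 0" using pos by simp
  ultimately show ?thesis using that by blast
qed

lemma L2_inner_self_pos:
  assumes "square_integrable f" "continuous_on UNIV f" "f x \<noteq> 0"
  shows "0 < L2_inner f f"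
proof -
  have int: "integrable lborel (\<lambda>u. f u * f u)"
    by (rule integrable_mult_if_square_integrable[OF assms(1,1)])
  have "0 \<le> L2_inner f f"
    using assms(1) by (simp add: L2_inner_eq_lborel)
  moreover have "L2_inner f f \<noteq> 0"
  proof
    assume "L2_inner f f = 0"
    then have "f x * f x = 0"
      using assms(1,2) by (intro continuous_nonneg_integral_eq_0[OF _ _ int])
        (auto simp: L2_inner_eq_lborel intro!: continuous_intros)
    with assms(3) show False by simp
  qed
  ultimately show ?thesis by simp
qed

lemma integral_affine_change_of_variables:
  fixes f :: "real^'n::{finite,wellorder} \<Rightarrow> real"
  assumes L: "linear L" "inj L" and int: "(\<lambda>x. f (L x + b)) absolutely_integrable_on UNIV"
  shows "integral UNIV f = \<bar>det (matrix L)\<bar> * integral UNIV (\<lambda>x. f (L x + b))"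
proof -
  have der: "((\<lambda>x. L x + b) has_derivative L) (at x within UNIV)" for x
    by (intro has_derivative_add_const linear_imp_has_derivative L(1))
  have inj: "inj (\<lambda>x. L x + b)"
    using L(2) by (simp add: inj_on_def)
  have surj: "range (\<lambda>x. L x + b) = UNIV"
  proof (intro set_eqI iffI)
    fix u
    obtain x where "u - b = L x"
      using surjD[OF linear_injective_imp_surjective[OF L]] by blast
    then show "u \<in> range (\<lambda>x. L x + b)" by (auto simp: algebra_simps)
  qed simp
  \<comment> \<open>The library states change of variables for vector-valued integrands; pass through \<open>real^1\<close>.\<close>
  have "(\<lambda>x. \<bar>det (matrix L)\<bar> *\<^sub>R vec (f (L x + b)) :: real^1) absolutely_integrable_on UNIV"
    using absolutely_integrable_scaleR_left[OF int, of "\<bar>det (matrix L)\<bar>"]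
    by (simp add: absolutely_integrable_on_1_iff)
  then have cov: "integral UNIV (\<lambda>u. vec (f u) :: real^1)
      = integral UNIV (\<lambda>x. \<bar>det (matrix L)\<bar> *\<^sub>R vec (f (L x + b)) :: real^1)"
    using integral_change_of_variables[OF _ der inj, of "\<lambda>u. vec (f u)"] surj by auto
  have component: "integral UNIV (\<lambda>x. vec (h x) :: real^1) $ 1 = integral UNIV h" for h
    by (simp add: integral_on_1_eq[of UNIV "\<lambda>x. vec (h x) :: real^1"])
  have "integral UNIV f = integral UNIV (\<lambda>u. vec (f u) :: real^1) $ 1"
    by (rule component[symmetric])
  also have "\<dots> = (\<bar>det (matrix L)\<bar> *\<^sub>R integral UNIV (\<lambda>x. vec (f (L x + b)) :: real^1)) $ 1"
    by (simp only: cov integral_cmul)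
  also have "\<dots> = \<bar>det (matrix L)\<bar> * integral UNIV (\<lambda>x. f (L x + b))"
    by (simp only: vector_scaleR_component component real_scaleR_def)
  finally show ?thesis .
qed

lemma L2_angle_affine_pullback:
  fixes f g :: "real^'n::{finite,wellorder} \<Rightarrow> real" and L :: "real^'n::_ \<Rightarrow> real^'n::_"
  assumes L: "linear L" "inj L"
    and f: "square_integrable (\<lambda>x. f (L x + b))" and g: "square_integrable (\<lambda>x. g (L x + b))"
  shows "L2_angle (\<lambda>x. f (L x + b)) (\<lambda>x. g (L x + b)) = L2_angle f g"
proof -
  define K where "K = \<bar>det (matrix L)\<bar>"
  have "K > 0" using L by (simp add: K_def det_nz_iff_inj)
  have inner: "L2_inner p q = K * L2_inner (\<lambda>x. p (L x + b)) (\<lambda>x. q (L x + b))"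
    if "square_integrable (\<lambda>x. p (L x + b))" "square_integrable (\<lambda>x. q (L x + b))" for p q
  proof -
    have "(\<lambda>x. p (L x + b) * q (L x + b)) absolutely_integrable_on UNIV"
      using integrable_mult_if_square_integrable[OF that]
      by (simp add: absolutely_integrable_on_def set_integrable_def integrable_completion)
    then show ?thesis
      unfolding L2_inner_def K_def by (rule integral_affine_change_of_variables[OF L])
  qed
  have "sqrt (K * x * (K * y)) = K * sqrt (x * y)" for x y
    using \<open>K > 0\<close> by (simp add: real_sqrt_mult mult_ac)
  then show ?thesis
    using \<open>K > 0\<close> by (simp add: L2_angle_def inner[OF f f] inner[OF g g] inner[OF f g])
qed

section \<open>Gaussian kernels\<close>

lemma integrable_exp_neg_sq_dist:
  fixes y :: "'a::euclidean_space"
  assumes m: "m > 0"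
  shows "integrable lborel (\<lambda>x. exp (- (m / 2) * ((x - y) \<bullet> (x - y))))"
proof -
  define \<sigma> where "\<sigma> = 1 / sqrt m"
  define c where "c = 1 / sqrt (2 * pi * \<sigma>\<^sup>2)"
  have \<sigma>: "\<sigma> > 0" "\<sigma>\<^sup>2 = 1 / m" using m by (simp_all add: \<sigma>_def power_divide)
  have "c > 0" using m by (simp add: c_def \<sigma>)
  define G where "G x = (\<Prod>i\<in>Basis. normal_density (y \<bullet> i) \<sigma> (x \<bullet> i))" for x :: 'a
  have normal: "normal_density \<mu> \<sigma> t = c * exp (- (m / 2) * (t - \<mu>)\<^sup>2)" for \<mu> t
    using m by (simp add: normal_density_def c_def \<sigma> field_simps)
  have G: "G x = c ^ DIM('a) * exp (- (m / 2) * ((x - y) \<bullet> (x - y)))" for x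
  proof -
    have "(x - y) \<bullet> (x - y) = (\<Sum>i\<in>Basis. (x \<bullet> i - y \<bullet> i)\<^sup>2)"
      by (simp only: euclidean_inner[of "x - y" "x - y"]) (simp add: inner_diff_left power2_eq_square)
    then show ?thesis
      by (simp add: G_def normal prod.distrib exp_sum sum_distrib_left)
  qed
  have "integrable lborel G"
  proof (rule integrableI_nonneg)
    show "G \<in> borel_measurable lborel"
      unfolding G_def by measurable
    show "AE x in lborel. 0 \<le> G x"
      by (simp add: G_def prod_nonneg)
    have "(\<integral>\<^sup>+x. ennreal (G x) \<partial>lborel)
        = (\<Prod>i\<in>Basis. \<integral>\<^sup>+t. ennreal (normal_density (y \<bullet> i) \<sigma> t) \<partial>lborel)"
      unfolding G_def by (simp add: prod_ennreal[symmetric]) (rule nn_integral_lborel_prod; simp)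
    also have "\<dots> = 1"
      using nn_integral_eq_integral[OF integrable_normal_density] \<sigma>(1) by simp
    finally show "(\<integral>\<^sup>+x. ennreal (G x) \<partial>lborel) < \<infinity>" by simp
  qed
  then have "integrable lborel (\<lambda>x. G x / c ^ DIM('a))" by simp
  then show ?thesis using \<open>c > 0\<close> by (simp add: G)
qed

lemma quadratic_form_coercive:
  fixes Y :: "real^'n^'n"
  assumes pos: "\<And>x. x \<noteq> 0 \<Longrightarrow> 0 < x \<bullet> (Y *v x)"
  obtains m where "m > 0" "\<And>v. m * (v \<bullet> v) \<le> v \<bullet> (Y *v v)"
proof -
  let ?S = "sphere (0::real^'n) 1"
  have "continuous_on ?S (\<lambda>v. v \<bullet> (Y *v v))"
    by (intro continuous_intros continuous_on_compose2[OF matrix_vector_mult_linear_continuous_on]) auto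
  moreover have "?S \<noteq> {}"
    using norm_axis_1 by (metis mem_sphere_0 empty_iff)
  ultimately obtain w where w: "w \<in> ?S" "\<And>v. v \<in> ?S \<Longrightarrow> w \<bullet> (Y *v w) \<le> v \<bullet> (Y *v v)"
    using continuous_attains_inf[OF compact_sphere] by blast
  have "w \<noteq> 0" using w(1) by auto
  then have "0 < w \<bullet> (Y *v w)" by (rule pos)
  moreover have "w \<bullet> (Y *v w) * (v \<bullet> v) \<le> v \<bullet> (Y *v v)" for v
  proof (cases "v = 0")
    case False
    have "w \<bullet> (Y *v w) \<le> ((1 / norm v) *\<^sub>R v) \<bullet> (Y *v ((1 / norm v) *\<^sub>R v))"
      using False by (intro w(2)) simp
    also have "\<dots> = (v \<bullet> (Y *v v)) / (v \<bullet> v)"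
      by (simp add: matrix_vector_mult_scaleR power2_norm_eq_inner[symmetric] power2_eq_square)
    finally show ?thesis using False by (simp add: field_simps)
  qed simp
  ultimately show ?thesis using that by blast
qed

definition gauss_kernel :: "real^'n \<Rightarrow> real^'n^'n \<Rightarrow> real^'n \<Rightarrow> real" where
  "gauss_kernel y Y u = exp (- (1/2) * ((u - y) \<bullet> (Y *v (u - y))))"

lemma gauss_kernel_pos: "0 < gauss_kernel y Y u"
  by (simp add: gauss_kernel_def)

lemma continuous_on_gauss_kernel: "continuous_on UNIV (gauss_kernel y Y)"
  unfolding gauss_kernel_def
  by (intro continuous_intros continuous_on_compose2[OF matrix_vector_mult_linear_continuous_on]) auto

lemma square_integrable_gauss_kernel:
  fixes Y :: "real^'n^'n"
  assumes pos: "\<And>x. x \<noteq> 0 \<Longrightarrow> 0 < x \<bullet> (Y *v x)"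
  shows "square_integrable (gauss_kernel y Y)"
proof -
  obtain m where m: "m > 0" "\<And>v. m * (v \<bullet> v) \<le> v \<bullet> (Y *v v)"
    using quadratic_form_coercive[OF pos] by blast
  have meas: "gauss_kernel y Y \<in> borel_measurable lborel"
    using borel_measurable_continuous_onI[OF continuous_on_gauss_kernel] by simp
  have "integrable lborel (\<lambda>u. (gauss_kernel y Y u)\<^sup>2)"
  proof (rule Bochner_Integration.integrable_bound[OF integrable_exp_neg_sq_dist[of "2 * m" y]])
    show "(\<lambda>u. (gauss_kernel y Y u)\<^sup>2) \<in> borel_measurable lborel"
      using meas by measurable
    have "(gauss_kernel y Y u)\<^sup>2 = exp (- ((u - y) \<bullet> (Y *v (u - y))))" for u
      by (simp add: gauss_kernel_def power2_eq_square exp_add[symmetric])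
    then show "AE u in lborel. norm ((gauss_kernel y Y u)\<^sup>2) \<le> norm (exp (- (2 * m / 2) * ((u - y) \<bullet> (u - y))))"
      using m(2) by simp
  qed (use m(1) in simp)
  with meas show ?thesis by (simp add: square_integrable_def)
qed

lemma symmetric_quadratic_form_eq_imp_eq:
  fixes Y Z :: "real^'n^'n"
  assumes Y: "transpose Y = Y" and Z: "transpose Z = Z"
    and form: "\<And>v. v \<bullet> (Y *v v) = v \<bullet> (Z *v v)"
  shows "Y = Z"
proof -
  have polar: "v \<bullet> (M *v w) = ((v + w) \<bullet> (M *v (v + w)) - v \<bullet> (M *v v) - w \<bullet> (M *v w)) / 2"
    if "transpose M = M" for M :: "real^'n^'n" and v w
  proof -
    have "v \<bullet> (M *v w) = (transpose M *v v) \<bullet> w" by (simp add: dot_lmul_matrix)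
    also have "transpose M *v v = M *v v" by (simp only: that)
    finally have "w \<bullet> (M *v v) = v \<bullet> (M *v w)" by (simp add: inner_commute)
    then show ?thesis
      by (simp add: matrix_vector_right_distrib inner_add_left inner_add_right)
  qed
  have "axis i 1 \<bullet> (Y *v axis j 1) = axis i 1 \<bullet> (Z *v axis j 1)" for i j
    by (simp only: polar[OF Y, of "axis i 1" "axis j 1"] polar[OF Z, of "axis i 1" "axis j 1"] form)
  then show ?thesis
    by (simp add: vec_eq_iff matrix_vector_mult_basis inner_axis' column_def)
qed

lemma quadratic_form_second_difference:
  fixes Z :: "real^'n^'n"
  shows "(w + v - z) \<bullet> (Z *v (w + v - z)) + (w - v - z) \<bullet> (Z *v (w - v - z))
    - 2 * ((w - z) \<bullet> (Z *v (w - z))) = 2 * (v \<bullet> (Z *v v))"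
proof -
  have "w + v - z = (w - z) + v" "w - v - z = (w - z) - v" by (simp_all add: algebra_simps)
  then show ?thesis
    by (simp add: matrix_vector_right_distrib matrix_vector_mult_diff_distrib
        inner_add_left inner_add_right inner_diff_left inner_diff_right)
qed

lemma quadratic_forms_differ_by_const_imp_eq:
  fixes Y Z :: "real^'n^'n"
  assumes Y: "transpose Y = Y" "\<And>x. x \<noteq> 0 \<Longrightarrow> 0 < x \<bullet> (Y *v x)" and Z: "transpose Z = Z"
    and diff: "\<And>u. (u - y) \<bullet> (Y *v (u - y)) = (u - z) \<bullet> (Z *v (u - z)) + C"
  shows "y = z \<and> Y = Z"
proof -
  have "v \<bullet> (Y *v v) = v \<bullet> (Z *v v)" for v
    using quadratic_form_second_difference[of y v y Y] quadratic_form_second_difference[of y v z Z]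
      diff[of "y + v"] diff[of "y - v"] diff[of y] by simp
  then have "Y = Z" by (rule symmetric_quadratic_form_eq_imp_eq[OF Y(1) Z])
  moreover have "(z - y) \<bullet> (Y *v (z - y)) = (y - z) \<bullet> (Y *v (y - z))"
    by (simp add: matrix_vector_mult_diff_distrib inner_diff_left inner_diff_right)
  ultimately have "(z - y) \<bullet> (Y *v (z - y)) = 0"
    using diff[of y] diff[of z] by simp
  then have "z - y = 0" using Y(2)[of "z - y"] by (metis less_irrefl)
  with \<open>Y = Z\<close> show ?thesis by simp
qed

lemma gauss_kernel_proportional_imp_eq:
  fixes Y Z :: "real^'n^'n"
  assumes Y: "transpose Y = Y" "\<And>x. x \<noteq> 0 \<Longrightarrow> 0 < x \<bullet> (Y *v x)" and Z: "transpose Z = Z"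
    and proportional: "\<And>u. gauss_kernel y Y u = k * gauss_kernel z Z u"
  shows "y = z \<and> Y = Z"
proof (rule quadratic_forms_differ_by_const_imp_eq[OF Y Z])
  have "k > 0"
    using proportional[of y] gauss_kernel_pos[of y Y y] gauss_kernel_pos[of z Z y] by (simp add: zero_less_mult_iff)
  fix u
  have "ln (gauss_kernel y Y u) = ln k + ln (gauss_kernel z Z u)"
    by (simp only: proportional ln_mult_pos[OF \<open>k > 0\<close> gauss_kernel_pos])
  then show "(u - y) \<bullet> (Y *v (u - y)) = (u - z) \<bullet> (Z *v (u - z)) + (- 2 * ln k)"
    by (simp add: gauss_kernel_def)
qed

section \<open>Ellipses and their densities\<close>

lemma quadratic_form_scaleR:
  fixes Y :: "real^'n^'n"
  shows "(a *\<^sub>R v) \<bullet> (Y *v (a *\<^sub>R v)) = a\<^sup>2 * (v \<bullet> (Y *v v))"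
  by (simp add: matrix_vector_mult_scaleR power2_eq_square)

lemma ellipse_set_eq_imp_eq:
  assumes Y: "spd2 Y" and Z: "spd2 Z" and eq: "ellipse_set y Y = ellipse_set z Z"
  shows "y = z \<and> Y = Z"
proof -
  have pos: "0 < v \<bullet> (M *v v)" if "spd2 M" "v \<noteq> 0" for M v
    using that by (simp add: spd2_def)
  define t where "t v = 1 / sqrt (v \<bullet> (Y *v v))" for v
  have t: "t v > 0" "(t v)\<^sup>2 * (v \<bullet> (Y *v v)) = 1" if "v \<noteq> 0" for v
    using pos[OF Y that] by (simp_all add: t_def power_divide)
  have on_Z: "(y + s *\<^sub>R v - z) \<bullet> (Z *v (y + s *\<^sub>R v - z)) = 1"
    if "v \<noteq> 0" "s = t v \<or> s = - t v" for v s
  proof -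
    have "(s *\<^sub>R v) \<bullet> (Y *v (s *\<^sub>R v)) = (t v)\<^sup>2 * (v \<bullet> (Y *v v))"
      using that(2) by (elim disjE) (simp_all only: quadratic_form_scaleR power2_minus)
    then have "y + s *\<^sub>R v \<in> ellipse_set y Y"
      using t(2)[OF \<open>v \<noteq> 0\<close>] by (simp add: ellipse_set_def)
    then have "y + s *\<^sub>R v \<in> ellipse_set z Z" by (simp only: eq)
    then show ?thesis by (simp only: ellipse_set_def mem_Collect_eq)
  qed
  \<comment> \<open>The points \<open>y \<plusminus> t d\<close> on the line through both centres would give \<open>(1 \<plusminus> t)\<^sup>2 d\<bullet>Zd = 1\<close>.\<close>
  have "y = z"
  proof (rule ccontr)
    assume "y \<noteq> z"
    define d where "d = y - z"
    have "d \<noteq> 0" using \<open>y \<noteq> z\<close> by (simp add: d_def)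
    have shift: "y + s *\<^sub>R d - z = (1 + s) *\<^sub>R d" for s
      by (simp add: d_def algebra_simps)
    have "(1 + s)\<^sup>2 * (d \<bullet> (Z *v d)) = 1" if "s = t d \<or> s = - t d" for s
      using on_Z[OF \<open>d \<noteq> 0\<close> that] by (simp only: shift quadratic_form_scaleR)
    from this[of "t d"] this[of "- t d"]
    have "((1 + t d)\<^sup>2 - (1 - t d)\<^sup>2) * (d \<bullet> (Z *v d)) = 0"
      by (simp add: left_diff_distrib)
    moreover have "(1 + t d)\<^sup>2 - (1 - t d)\<^sup>2 = 4 * t d"
      by (simp add: power2_eq_square algebra_simps)
    ultimately have "4 * t d * (d \<bullet> (Z *v d)) = 0" by simp
    with t(1)[OF \<open>d \<noteq> 0\<close>] pos[OF Z \<open>d \<noteq> 0\<close>] show False by simp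
  qed
  have "v \<bullet> (Y *v v) = v \<bullet> (Z *v v)" for v
  proof (cases "v = 0")
    case False
    have "y + t v *\<^sub>R v - z = t v *\<^sub>R v" using \<open>y = z\<close> by simp
    then have "(t v)\<^sup>2 * (v \<bullet> (Z *v v)) = 1"
      using on_Z[OF False, of "t v"] by (simp only: quadratic_form_scaleR simp_thms)
    with t(2)[OF False] have "(t v)\<^sup>2 * (v \<bullet> (Y *v v)) = (t v)\<^sup>2 * (v \<bullet> (Z *v v))" by simp
    then show ?thesis using t(1)[OF False] by simp
  qed simp
  then have "Y = Z"
    by (rule symmetric_quadratic_form_eq_imp_eq[rotated 2]) (use Y Z in \<open>simp_all add: spd2_def\<close>)
  with \<open>y = z\<close> show ?thesis ..
qed

lemma ell_params_ellipse_set: "spd2 Y \<Longrightarrow> ell_params (ellipse_set y Y) = (y, Y)"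
  unfolding ell_params_def
  by (rule some_equality) (auto dest: ellipse_set_eq_imp_eq)

lemma ell_density_ellipse_set: "spd2 Y \<Longrightarrow> ell_density (ellipse_set y Y) = gauss_kernel y Y"
  by (simp add: fun_eq_iff ell_density_def ell_params_ellipse_set gauss_kernel_def)

lemma ell_density_in_L2:
  assumes "is_ellipse A"
  shows "square_integrable (ell_density A)" and "continuous_on UNIV (ell_density A)"
    and "0 < L2_inner (ell_density A) (ell_density A)"
proof -
  obtain y Y where Y: "spd2 Y" and A: "A = ellipse_set y Y"
    using assms by (auto simp: is_ellipse_def)
  then have density: "ell_density A = gauss_kernel y Y"
    by (simp add: ell_density_ellipse_set)
  show sq: "square_integrable (ell_density A)"
    unfolding density by (rule square_integrable_gauss_kernel) (use Y in \<open>simp add: spd2_def\<close>)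
  show cont: "continuous_on UNIV (ell_density A)"
    unfolding density by (rule continuous_on_gauss_kernel)
  show "0 < L2_inner (ell_density A) (ell_density A)"
    by (rule L2_inner_self_pos[OF sq cont, of y]) (simp add: density gauss_kernel_def)
qed

lemma ell_density_proportional_imp_eq:
  assumes "is_ellipse A" "is_ellipse B" and proportional: "\<And>u. ell_density A u = k * ell_density B u"
  shows "A = B"
proof -
  obtain y Y z Z where Y: "spd2 Y" "A = ellipse_set y Y" and Z: "spd2 Z" "B = ellipse_set z Z"
    using assms(1,2) by (auto simp: is_ellipse_def)
  have "y = z \<and> Y = Z"
    by (rule gauss_kernel_proportional_imp_eq[where k = k])
       (use Y Z proportional in \<open>auto simp: spd2_def ell_density_ellipse_set\<close>)
  with Y Z show ?thesis by simp
qed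

lemma d_GA_eq_L2_angle: "d_GA A B = L2_angle (ell_density A) (ell_density B)"
  by (simp add: d_GA_def L2_angle_def L2_inner_def power2_eq_square)

section \<open>Similarities\<close>

lemma orthogonal_transformation_matrix_vector_mult:
  fixes R :: "real^'n^'n"
  shows "orthogonal_matrix R \<Longrightarrow> orthogonal_transformation (\<lambda>x. R *v x)"
  using orthogonal_transformation_matrix[of "\<lambda>x. R *v x"] by simp

lemma orthogonal_matrix_transpose_cancel:
  assumes "orthogonal_matrix R"
  shows "R *v (transpose R *v x) = (x :: real^'n)"
  using assms by (simp add: orthogonal_matrix_def matrix_vector_mul_assoc del: transpose_matrix_vector)

definition image_ellipse_matrix :: "real \<Rightarrow> real^'n^'n \<Rightarrow> real^'n^'n \<Rightarrow> real^'n^'n" where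
  "image_ellipse_matrix c R Y = (1 / c\<^sup>2) *\<^sub>R (R ** Y ** transpose R)"

lemma quadratic_form_image_ellipse_matrix:
  fixes Y :: "real^'n^'n"
  assumes c: "c \<noteq> 0" and R: "orthogonal_matrix R"
  shows "(c *\<^sub>R (R *v w)) \<bullet> (image_ellipse_matrix c R Y *v (c *\<^sub>R (R *v w))) = w \<bullet> (Y *v w)"
proof -
  have "transpose R *v (R *v w) = w"
    using orthogonal_matrix_transpose_cancel[of "transpose R"] R by simp
  then have "(R ** Y ** transpose R) *v (R *v w) = R *v (Y *v w)"
    by (simp add: matrix_vector_mul_assoc[symmetric] del: transpose_matrix_vector)
  then have "image_ellipse_matrix c R Y *v (c *\<^sub>R (R *v w)) = (1 / c) *\<^sub>R (R *v (Y *v w))"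
    using c by (simp add: image_ellipse_matrix_def scaleR_matrix_vector_assoc[symmetric]
        matrix_vector_mult_scaleR power2_eq_square)
  then have "(c *\<^sub>R (R *v w)) \<bullet> (image_ellipse_matrix c R Y *v (c *\<^sub>R (R *v w))) = (R *v w) \<bullet> (R *v (Y *v w))"
    using c by simp
  also have "\<dots> = w \<bullet> (Y *v w)"
    using orthogonal_transformation_matrix_vector_mult[OF R] by (simp add: orthogonal_transformation_def)
  finally show ?thesis .
qed

lemma spd2_image_ellipse_matrix:
  assumes c: "c \<noteq> 0" and R: "orthogonal_matrix R" and Y: "spd2 Y"
  shows "spd2 (image_ellipse_matrix c R Y)"
  unfolding spd2_def
proof (intro conjI allI impI)
  show "transpose (image_ellipse_matrix c R Y) = image_ellipse_matrix c R Y"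
    using Y by (simp add: spd2_def image_ellipse_matrix_def transpose_scalar matrix_transpose_mul matrix_mul_assoc)
next
  fix v :: "real^2"
  assume "v \<noteq> 0"
  define w where "w = (1 / c) *\<^sub>R (transpose R *v v)"
  have v: "v = c *\<^sub>R (R *v w)"
    using c by (simp add: w_def matrix_vector_mult_scaleR orthogonal_matrix_transpose_cancel[OF R] del: transpose_matrix_vector)
  with \<open>v \<noteq> 0\<close> have "w \<noteq> 0" by auto
  then have "0 < w \<bullet> (Y *v w)" using Y by (simp add: spd2_def)
  then show "0 < v \<bullet> (image_ellipse_matrix c R Y *v v)"
    unfolding v quadratic_form_image_ellipse_matrix[OF c R] .
qed

lemma similarity_image_ellipse_set:
  fixes b :: "real^2"
  assumes c: "c \<noteq> 0" and R: "orthogonal_matrix R"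
  defines "S \<equiv> \<lambda>x. c *\<^sub>R (R *v x) + b"
  shows "S ` ellipse_set y Y = ellipse_set (S y) (image_ellipse_matrix c R Y)"
proof -
  have form: "(S x - S y) \<bullet> (image_ellipse_matrix c R Y *v (S x - S y)) = (x - y) \<bullet> (Y *v (x - y))" for x
  proof -
    have "S x - S y = c *\<^sub>R (R *v (x - y))"
      by (simp add: S_def matrix_vector_mult_diff_distrib algebra_simps)
    then show ?thesis by (simp only: quadratic_form_image_ellipse_matrix[OF c R])
  qed
  have "surj S"
  proof (rule surjI)
    show "S ((1 / c) *\<^sub>R (transpose R *v (u - b))) = u" for u
      using c by (simp add: S_def matrix_vector_mult_scaleR orthogonal_matrix_transpose_cancel[OF R] del: transpose_matrix_vector)
  qed
  show ?thesis
  proof (intro set_eqI iffI)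
    fix u
    assume u: "u \<in> ellipse_set (S y) (image_ellipse_matrix c R Y)"
    obtain x where "u = S x" using surjD[OF \<open>surj S\<close>] by blast
    with u form[of x] show "u \<in> S ` ellipse_set y Y" by (auto simp: ellipse_set_def)
  qed (use form in \<open>auto simp: ellipse_set_def\<close>)
qed

lemma ell_density_similarity_image:
  fixes b :: "real^2"
  assumes A: "is_ellipse A" and c: "c \<noteq> 0" and R: "orthogonal_matrix R"
  defines "S \<equiv> \<lambda>x. c *\<^sub>R (R *v x) + b"
  shows "ell_density (S ` A) (S x) = ell_density A x"
proof -
  obtain y Y where Y: "spd2 Y" and A_eq: "A = ellipse_set y Y"
    using A by (auto simp: is_ellipse_def)
  have image: "S ` ellipse_set y Y = ellipse_set (S y) (image_ellipse_matrix c R Y)"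
    unfolding S_def by (rule similarity_image_ellipse_set[OF c R])
  have spd2: "spd2 (image_ellipse_matrix c R Y)"
    by (rule spd2_image_ellipse_matrix[OF c R Y])
  have "S x - S y = c *\<^sub>R (R *v (x - y))"
    by (simp add: S_def matrix_vector_mult_diff_distrib algebra_simps)
  then show ?thesis
    by (simp only: A_eq image ell_density_ellipse_set[OF spd2] ell_density_ellipse_set[OF Y]
        gauss_kernel_def quadratic_form_image_ellipse_matrix[OF c R])
qed

lemma d_GA_similarity_image:
  assumes A: "is_ellipse A" and B: "is_ellipse B" and S: "similarity2 S"
  shows "d_GA (S ` A) (S ` B) = d_GA A B"
proof -
  obtain c R b where c: "c > 0" and R: "orthogonal_matrix R" and S_eq: "S = (\<lambda>x. c *\<^sub>R (R *v x) + b)"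
    using S unfolding similarity2_def by blast
  define L where "L x = c *\<^sub>R (R *v x)" for x :: "real^2"
  have "linear L"
    unfolding L_def scaleR_matrix_vector_assoc by (rule matrix_vector_mul_linear)
  moreover have "inj L"
  proof (rule injI)
    fix x y assume "L x = L y"
    then have "R *v x = R *v y" using c by (simp add: L_def)
    then show "x = y"
      using orthogonal_transformation_inj[OF orthogonal_transformation_matrix_vector_mult[OF R]]
      by (auto dest: injD)
  qed
  moreover have pullback: "(\<lambda>x. ell_density (S ` E) (L x + b)) = ell_density E" if "is_ellipse E" for E
    using ell_density_similarity_image[OF that, of c R b] c R by (simp add: S_eq L_def fun_eq_iff)
  ultimately have "L2_angle (ell_density (S ` A)) (ell_density (S ` B)) = L2_angle (ell_density A) (ell_density B)"
    using L2_angle_affine_pullback[of L "ell_density (S ` A)" b "ell_density (S ` B)"]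
    by (simp add: pullback A B ell_density_in_L2)
  then show ?thesis by (simp add: d_GA_eq_L2_angle)
qed

theorem mainTheorem8:
  assumes "is_ellipse Ai" and "is_ellipse Aj"
  shows "(d_GA Ai Aj = 0 \<longleftrightarrow> Ai = Aj)
       \<and> d_GA Ai Aj = d_GA Aj Ai
       \<and> (\<forall>Ak. is_ellipse Ak \<longrightarrow> d_GA Ai Aj \<le> d_GA Ai Ak + d_GA Ak Aj)
       \<and> (\<forall>S. similarity2 S \<longrightarrow> d_GA (S ` Ai) (S ` Aj) = d_GA Ai Aj)"
proof (intro conjI allI impI)
  show "d_GA Ai Aj = 0 \<longleftrightarrow> Ai = Aj"
  proof
    assume "d_GA Ai Aj = 0"
    then obtain k where "\<And>u. ell_density Ai u = k * ell_density Aj u"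
      using L2_angle_eq_0_imp_proportional ell_density_in_L2[OF assms(1)] ell_density_in_L2[OF assms(2)]
      by (metis d_GA_eq_L2_angle)
    then show "Ai = Aj" by (rule ell_density_proportional_imp_eq[OF assms])
  qed (simp add: d_GA_eq_L2_angle L2_angle_self ell_density_in_L2(3)[OF assms(2)])
  show "d_GA Ai Aj = d_GA Aj Ai"
    by (simp add: d_GA_eq_L2_angle L2_angle_commute)
  show "d_GA Ai Aj \<le> d_GA Ai Ak + d_GA Ak Aj" if "is_ellipse Ak" for Ak
    unfolding d_GA_eq_L2_angle
    by (rule L2_angle_triangle) (simp_all add: ell_density_in_L2 assms that)
  show "d_GA (S ` Ai) (S ` Aj) = d_GA Ai Aj" if "similarity2 S" for S
    by (rule d_GA_similarity_image[OF assms that])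
qed

end
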